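(* Let $G$ be a directed acyclic graph with $n$ vertices labelled $v_1,\ldots,v_n$ in a topological order, with real edge lengths, let $\varepsilon>0$, $q=(1+\varepsilon)^{1/(n+1)}$, and let $\tau,\tau'$ be the functions defined in the context. Given a real $L$, let $k$ be an integer such that $\tau'(v_n,q^k)\le L<\tau'(v_n,q^{k+1})$ and let $a$ be a non-negative integer such that $\tau(v_n,a)\le L<\tau(v_n,a+1)$. Then $$(1+\varepsilon)^{-1}\le \frac{a}{q^k}\le 1+\varepsilon.$$
   Context: For a vertex $v_i$ and a real number $x\ge 0$, $\tau(v_i,x)$ is the infimum of all real $L'$ such that there are at least $x$ directed paths from $v_1$ to $v_i$ of length (sum of edge lengths) at most $L'$, with $\inf\emptyset=\infty$; the trivial path from $v_1$ to itself has length $0$. For a vertex $v_i$ with $i>1$, let $p_1,\ldots,p_d$ be the tails of the edges entering $v_i$ and $l_1,\ldots,l_d$ the lengths of these edges. The function $\tau'$ is defined on pairs $(v_i,y)$ with $y=0$ or $y=q^j$ for an integer $j$ by: $\tau'(v_1,0)=-\infty$, $\tau'(v_1,y)=0$ for $0<y\le 1$, $\tau'(v_1,y)=\infty$ for $y>1$, and for $i>1$, $$\tau'(v_i,q^j)=\min_{\substack{\alpha_1,\ldots,\alpha_d\ge 0\\ \sum_s\alpha_s=1}}\ \max_{s}\Big(\tau'\big(p_s,q^{\lfloor j+\log_q\alpha_s\rfloor}\big)+l_s\Big),$$ where $q^{\lfloor j+\log_q\alpha_s\rfloor}$ is interpreted as $0$ when $\alpha_s=0$, and $\tau'(v_i,0)=-\infty$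 for every $i$. *)

theory Defs
  imports Complex_Main "HOL-Library.Extended_Real"
begin

(* Vertices are the naturals 1..n (v_i = i), in topological order. *)

definition dag :: "nat \<Rightarrow> (nat \<times> nat) set \<Rightarrow> bool" where
  "dag n E \<longleftrightarrow> (\<forall>(i,j)\<in>E. 1 \<le> i \<and> i < j \<and> j \<le> n)"

definition paths :: "(nat \<times> nat) set \<Rightarrow> nat \<Rightarrow> nat list set" where
  "paths E i = {xs. xs \<noteq> [] \<and> hd xs = 1 \<and> last xs = i \<and>
                    (\<forall>k. Suc k < length xs \<longrightarrow> (xs ! k, xs ! Suc k) \<in> E)}"

definition path_len :: "(nat \<Rightarrow> nat \<Rightarrow> real) \<Rightarrow> nat list \<Rightarrow> real" where
  "path_len l xs = (\<Sum>k<length xs - 1. l (xs ! k) (xs ! Suc k))"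

definition tau :: "(nat \<times> nat) set \<Rightarrow> (nat \<Rightarrow> nat \<Rightarrow> real) \<Rightarrow> nat \<Rightarrow> real \<Rightarrow> ereal" where
  "tau E l i x = Inf {ereal L' | L'. x \<le> real (card {p \<in> paths E i. path_len l p \<le> L'})}"

(* Second argument of tau': None encodes y = 0, Some j encodes y = q^j. *)
definition tau'_arg :: "real \<Rightarrow> int \<Rightarrow> real \<Rightarrow> int option" where
  "tau'_arg q j \<alpha> = (if \<alpha> = 0 then None else Some \<lfloor>real_of_int j + log q \<alpha>\<rfloor>)"

(* tau'_upto E l q k gives the correct values of tau' on vertices 1..k+1 *)
primrec tau'_upto :: "(nat \<times> nat) set \<Rightarrow> (nat \<Rightarrow> nat \<Rightarrow> real) \<Rightarrow> real \<Rightarrow> nat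
                      \<Rightarrow> nat \<Rightarrow> int option \<Rightarrow> ereal" where
  "tau'_upto E l q 0 = (\<lambda>i y. case y of None \<Rightarrow> -\<infinity>
                         | Some j \<Rightarrow> (if q powi j \<le> 1 then 0 else \<infinity>))"
| "tau'_upto E l q (Suc k) =
     (let f = tau'_upto E l q k; i = Suc (Suc k); P = {p. (p, i) \<in> E} in
      f(i := (\<lambda>y. case y of None \<Rightarrow> -\<infinity>
               | Some j \<Rightarrow>
                  Inf {(SUP p\<in>P. f p (tau'_arg q j (\<alpha> p)) + ereal (l p i)) | \<alpha>.
                        (\<forall>p\<in>P. 0 \<le> \<alpha> p) \<and> (\<Sum>p\<in>P. \<alpha> p) = 1})))"

definition tau' :: "(nat \<times> nat) set \<Rightarrow> (nat \<Rightarrow> nat \<Rightarrow> real) \<Rightarrow> real \<Rightarrow> nat \<Rightarrow> int option \<Rightarrow> ereal" where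
  "tau' E l q i y = tau'_upto E l q (i - 1) i y"

end

theory Submission
  imports Defs
begin

text \<open>
  Let N(i, L) (path_count below) count the paths from v_1 to v_i of length at most L. As there are finitely many
  paths, N(i, -) is a right-continuous step function, so \<open>\<tau>(v_i, x) \<le> L\<close> iff \<open>x \<le> N(i, L)\<close>,
  and the hypotheses on a say exactly a = N(n, L). The counts satisfy the recursion
  N(i, L) = \<open>\<Sum>\<close> N(p, L - l(p, i)) over the predecessors p of v_i, which \<open>\<tau>'\<close> imitates with each
  predecessor's share rounded down to a power of q. Induction along the topological order gives
  both directions: \<open>q^j \<le> N(i, L)\<close> implies \<open>\<tau>'(v_i, q^j) \<le> L\<close> (split q^j in proportion to the
  predecessors' counts), and \<open>\<tau>'(v_i, q^j) \<le> L\<close> implies \<open>q^(j - i + 1) \<le> N(i, L)\<close> (each of the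
  at most i - 1 roundings along a path loses one factor q). Hence \<open>q^(k - n + 1) \<le> a < q^(k + 1)\<close>,
  and \<open>q^(n + 1) = 1 + \<epsilon>\<close>.
\<close>

abbreviation preds :: "(nat \<times> nat) set \<Rightarrow> nat \<Rightarrow> nat set" where
  "preds E i \<equiv> {p. (p, i) \<in> E}"

lemma dag_predsD: "dag n E \<Longrightarrow> p \<in> preds E i \<Longrightarrow> 1 \<le> p \<and> p < i"
  by (auto simp: dag_def)

lemma finite_preds: "dag n E \<Longrightarrow> finite (preds E i)"
  by (rule finite_subset[of _ "{..<i}"]) (auto dest: dag_predsD)

lemma snoc_in_paths_iff:
  "xs \<noteq> [] \<Longrightarrow> xs @ [i] \<in> paths E j \<longleftrightarrow> j = i \<and> xs \<in> paths E (last xs) \<and> (last xs, i) \<in> E"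
proof -
  assume "xs \<noteq> []"
  then obtain m where m: "length xs = Suc m" by (cases xs) auto
  have "(\<forall>k. Suc k < length (xs @ [i]) \<longrightarrow> ((xs @ [i]) ! k, (xs @ [i]) ! Suc k) \<in> E) \<longleftrightarrow>
        (\<forall>k. Suc k < length xs \<longrightarrow> (xs ! k, xs ! Suc k) \<in> E) \<and> (xs ! m, i) \<in> E"
    using m by (auto simp: nth_append less_Suc_eq)
  with \<open>xs \<noteq> []\<close> m show ?thesis by (auto simp: paths_def last_conv_nth)
qed

lemma paths_cases:
  assumes "ys \<in> paths E i"
  obtains "ys = [1]" "i = 1"
  | xs where "ys = xs @ [i]" "xs \<noteq> []" "xs \<in> paths E (last xs)" "(last xs, i) \<in> E"
proof (cases "butlast ys = []")
  case True
  moreover from assms have "ys \<noteq> []" by (simp add: paths_def)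
  ultimately obtain x where "ys = [x]" by (cases ys) (auto split: if_splits)
  with assms have "ys = [1]" "i = 1" by (auto simp: paths_def)
  then show ?thesis by (rule that(1))
next
  case False
  from assms have "ys = butlast ys @ [i]" by (auto simp: paths_def)
  with False assms show ?thesis using that(2) snoc_in_paths_iff by metis
qed

lemma paths_start: "dag n E \<Longrightarrow> paths E 1 = {[1]}"
proof -
  assume dag: "dag n E"
  have "ys = [1]" if "ys \<in> paths E 1" for ys
    using that by (cases rule: paths_cases) (use dag in \<open>auto simp: dag_def\<close>)
  then show ?thesis by (auto simp: paths_def)
qed

lemma paths_eq_UN_snoc:
  assumes "i \<noteq> 1"
  shows "paths E i = (\<Union>p\<in>preds E i. (\<lambda>xs. xs @ [i]) ` paths E p)"
proof
  show "paths E i \<subseteq> (\<Union>p\<in>preds E i. (\<lambda>xs. xs @ [i]) ` paths E p)"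
  proof
    fix ys assume "ys \<in> paths E i"
    then show "ys \<in> (\<Union>p\<in>preds E i. (\<lambda>xs. xs @ [i]) ` paths E p)"
      by (cases rule: paths_cases) (use assms in auto)
  qed
  show "(\<Union>p\<in>preds E i. (\<lambda>xs. xs @ [i]) ` paths E p) \<subseteq> paths E i"
  proof clarify
    fix p xs assume "(p, i) \<in> E" "xs \<in> paths E p"
    moreover from \<open>xs \<in> paths E p\<close> have "xs \<noteq> []" "last xs = p" by (auto simp: paths_def)
    ultimately show "xs @ [i] \<in> paths E i" by (simp add: snoc_in_paths_iff)
  qed
qed

lemma path_len_snoc: "xs \<noteq> [] \<Longrightarrow> path_len l (xs @ [i]) = path_len l xs + l (last xs) i"
proof -
  assume "xs \<noteq> []"
  then obtain m where m: "length xs = Suc m" by (cases xs) auto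
  then have "path_len l (xs @ [i]) = (\<Sum>k<m. l (xs ! k) (xs ! Suc k)) + l (xs ! m) i"
    by (simp add: path_len_def nth_append)
  also have "xs ! m = last xs" using m \<open>xs \<noteq> []\<close> by (simp add: last_conv_nth)
  finally show ?thesis by (simp add: path_len_def m)
qed

lemma finite_paths: "dag n E \<Longrightarrow> finite (paths E i)"
proof (induction i rule: less_induct)
  case (less i)
  show ?case
  proof (cases "i = 1")
    case True
    then show ?thesis using paths_start[OF less.prems] by simp
  next
    case False
    then show ?thesis using paths_eq_UN_snoc[OF False] less finite_preds[OF less.prems]
      by (auto dest: dag_predsD)
  qed
qed

definition path_count :: "(nat \<times> nat) set \<Rightarrow> (nat \<Rightarrow> nat \<Rightarrow> real) \<Rightarrow> nat \<Rightarrow> real \<Rightarrow> nat" where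
  "path_count E l i L = card {p \<in> paths E i. path_len l p \<le> L}"

lemma path_count_start:
  assumes "dag n E"
  shows "path_count E l 1 L = (if 0 \<le> L then 1 else 0)"
proof -
  have "{p \<in> {[1]}. path_len l p \<le> L} = (if 0 \<le> L then {[1]} else {})"
    by (auto simp: path_len_def)
  then show ?thesis unfolding path_count_def paths_start[OF assms] by simp
qed

lemma path_count_mono:
  assumes "dag n E" and "L \<le> L'"
  shows "path_count E l i L \<le> path_count E l i L'"
  unfolding path_count_def
  by (rule card_mono) (use finite_paths[OF assms(1)] assms(2) in auto)

lemma path_count_eq_sum_preds:
  assumes dag: "dag n E" and "i \<noteq> 1"
  shows "path_count E l i L = (\<Sum>p\<in>preds E i. path_count E l p (L - l p i))"
proof -
  define S where "S p = {xs \<in> paths E p. path_len l xs \<le> L - l p i}" for p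
  have "{ys \<in> paths E i. path_len l ys \<le> L} = (\<Union>p\<in>preds E i. (\<lambda>xs. xs @ [i]) ` S p)"
    using paths_eq_UN_snoc[OF \<open>i \<noteq> 1\<close>]
    by (auto simp: S_def path_len_snoc paths_def algebra_simps)
  moreover have "card (\<Union>p\<in>preds E i. (\<lambda>xs. xs @ [i]) ` S p) = (\<Sum>p\<in>preds E i. card (S p))"
  proof (subst card_UN_disjoint)
    show "\<forall>p\<in>preds E i. \<forall>p'\<in>preds E i. p \<noteq> p' \<longrightarrow>
        (\<lambda>xs. xs @ [i]) ` S p \<inter> (\<lambda>xs. xs @ [i]) ` S p' = {}"
      by (auto simp: S_def paths_def)
    show "(\<Sum>p\<in>preds E i. card ((\<lambda>xs. xs @ [i]) ` S p)) = (\<Sum>p\<in>preds E i. card (S p))"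
      by (intro sum.cong refl card_image) (simp add: inj_on_def)
  qed (auto simp: S_def finite_preds[OF dag] finite_paths[OF dag])
  ultimately show ?thesis by (simp add: path_count_def S_def)
qed

lemma eventually_path_count_at_right:
  assumes dag: "dag n E"
  shows "\<forall>\<^sub>F L' in at_right L. path_count E l i L' = path_count E l i L"
proof -
  let ?long = "{p \<in> paths E i. L < path_len l p}"
  have "\<forall>\<^sub>F L' in at_right L. \<forall>p\<in>?long. L' < path_len l p"
    using finite_paths[OF dag] by (intro eventually_ball_finite) (auto simp: eventually_at_right_field)
  with eventually_at_right_less show ?thesis
    by eventually_elim (auto simp: path_count_def intro!: arg_cong[where f = card])
qed

lemma le_path_count_of_right:
  assumes "dag n E" and "\<And>L'. L < L' \<Longrightarrow> X \<le> real (path_count E l i L')"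
  shows "X \<le> real (path_count E l i L)"
proof -
  have "\<forall>\<^sub>F L' in at_right L. X \<le> real (path_count E l i L') \<and> path_count E l i L' = path_count E l i L"
    using eventually_at_right_less eventually_path_count_at_right[OF assms(1)]
    by eventually_elim (use assms(2) in auto)
  then show ?thesis by (auto dest: eventually_happens'[OF trivial_limit_at_right_real])
qed

lemma tau_le_iff: "dag n E \<Longrightarrow> tau E l i x \<le> ereal L \<longleftrightarrow> x \<le> real (path_count E l i L)"
proof
  assume dag: "dag n E" and "tau E l i x \<le> ereal L"
  show "x \<le> real (path_count E l i L)"
  proof (rule le_path_count_of_right[OF dag])
    fix L' assume "L < L'"
    then have "tau E l i x < ereal L'"
      using \<open>tau E l i x \<le> ereal L\<close> le_less_trans by fastforce
    then obtain L'' where "x \<le> real (path_count E l i L'')" "L'' < L'"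
      by (auto simp: tau_def Inf_less_iff path_count_def)
    with path_count_mono[OF dag, of L'' L' l i] show "x \<le> real (path_count E l i L')"
      by linarith
  qed
next
  assume "x \<le> real (path_count E l i L)"
  then show "tau E l i x \<le> ereal L"
    unfolding tau_def by (intro Inf_lower) (auto simp: path_count_def)
qed

lemma tau'_upto_None: "tau'_upto E l q m i None = -\<infinity>"
  by (induction m arbitrary: i) (auto simp: Let_def)

lemma tau'_None: "tau' E l q i None = -\<infinity>"
  by (simp add: tau'_def tau'_upto_None)

lemma tau'_upto_eq_tau': "p \<le> Suc m \<Longrightarrow> tau'_upto E l q m p = tau' E l q p"
proof (induction m arbitrary: p)
  case 0
  then show ?case by (cases p) (auto simp: tau'_def)
next
  case (Suc m)
  then show ?case by (cases "p = Suc (Suc m)") (auto simp: tau'_def Let_def)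
qed

lemma tau'_start: "tau' E l q 1 (Some j) = (if q powi j \<le> 1 then 0 else \<infinity>)"
  by (simp add: tau'_def)

lemma tau'_Some_eq_Inf:
  assumes dag: "dag n E" and "2 \<le> i"
  shows "tau' E l q i (Some j) =
    Inf {(SUP p\<in>preds E i. tau' E l q p (tau'_arg q j (\<alpha> p)) + ereal (l p i)) | \<alpha>.
          (\<forall>p\<in>preds E i. 0 \<le> \<alpha> p) \<and> (\<Sum>p\<in>preds E i. \<alpha> p) = 1}"
proof -
  obtain m where m: "i = Suc (Suc m)" using \<open>2 \<le> i\<close> by (metis add_2_eq_Suc le_Suc_ex)
  have "tau'_upto E l q m p = tau' E l q p" if "p \<in> preds E i" for p
    using that dag m by (intro tau'_upto_eq_tau') (auto dest: dag_predsD)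
  then have "(SUP p\<in>preds E i. tau'_upto E l q m p (tau'_arg q j (\<alpha> p)) + ereal (l p i)) =
      (SUP p\<in>preds E i. tau' E l q p (tau'_arg q j (\<alpha> p)) + ereal (l p i))" for \<alpha>
    by (intro SUP_cong) simp_all
  moreover have "tau' E l q i (Some j) = tau'_upto E l q (Suc m) i (Some j)"
    by (simp add: tau'_def m)
  ultimately show ?thesis by (simp add: m Let_def)
qed

lemma tau'_arg_pos: "0 < \<alpha> \<Longrightarrow> tau'_arg q j \<alpha> = Some \<lfloor>real_of_int j + log q \<alpha>\<rfloor>"
  by (simp add: tau'_arg_def)

lemma powi_floor_log_bounds:
  fixes q \<alpha> :: real
  assumes "1 < q" and "0 < \<alpha>"
  shows "q powi \<lfloor>real_of_int j + log q \<alpha>\<rfloor> \<le> q powi j * \<alpha>"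
    and "q powi j * \<alpha> < q powi (\<lfloor>real_of_int j + log q \<alpha>\<rfloor> + 1)"
proof -
  have powi_eq: "q powi k = q powr real_of_int k" for k
    using assms(1) by (simp add: powr_real_of_int')
  have prod: "q powi j * \<alpha> = q powr (real_of_int j + log q \<alpha>)"
    using assms by (simp add: powr_add powi_eq)
  show "q powi \<lfloor>real_of_int j + log q \<alpha>\<rfloor> \<le> q powi j * \<alpha>"
    unfolding prod by (simp add: powi_eq assms(1))
  show "q powi j * \<alpha> < q powi (\<lfloor>real_of_int j + log q \<alpha>\<rfloor> + 1)"
    unfolding prod powi_eq[of "_ + 1"] using assms(1) by (intro powr_less_mono) linarith+
qed

lemma mult_powi_le_powi_floor_log:
  fixes q \<alpha> :: real and p i :: nat
  assumes q: "1 < q" and "0 < \<alpha>" and "p < i"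
  shows "\<alpha> * q powi (j - int i + 1) \<le> q powi (\<lfloor>real_of_int j + log q \<alpha>\<rfloor> - int p + 1)"
proof -
  let ?m = "\<lfloor>real_of_int j + log q \<alpha>\<rfloor>"
  have "\<alpha> * q powi (j - int i + 1) = (q powi j * \<alpha>) * q powi (1 - int i)"
    using q power_int_add[of q j "1 - int i"] by (simp add: algebra_simps)
  also have "\<dots> \<le> q powi (?m + 1) * q powi (- int p)"
    using less_imp_le[OF powi_floor_log_bounds(2)[OF q \<open>0 < \<alpha>\<close>]] \<open>p < i\<close> q
    by (intro mult_mono power_int_increasing) auto
  also have "\<dots> = q powi (?m - int p + 1)"
    using q by (simp add: power_int_add[symmetric] algebra_simps)
  finally show ?thesis .
qed

lemma tau'_le_ereal_of_weights:
  assumes dag: "dag n E" and "2 \<le> i"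
    and "\<forall>p\<in>preds E i. 0 \<le> \<alpha> p" and "(\<Sum>p\<in>preds E i. \<alpha> p) = 1"
    and \<tau>': "\<And>p. p \<in> preds E i \<Longrightarrow> 0 < \<alpha> p \<Longrightarrow>
      tau' E l q p (Some \<lfloor>real_of_int j + log q (\<alpha> p)\<rfloor>) \<le> ereal (L - l p i)"
  shows "tau' E l q i (Some j) \<le> ereal L"
proof -
  have "tau' E l q p (tau'_arg q j (\<alpha> p)) + ereal (l p i) \<le> ereal L" if p: "p \<in> preds E i" for p
  proof (cases "\<alpha> p = 0")
    case True
    then show ?thesis by (simp add: tau'_arg_def tau'_None)
  next
    case False
    then have "0 < \<alpha> p" using assms(3) p by force
    with \<tau>'[OF p] show ?thesis
      by (cases "tau' E l q p (Some \<lfloor>real_of_int j + log q (\<alpha> p)\<rfloor>)") (auto simp: tau'_arg_pos)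
  qed
  with assms(3,4) show ?thesis
    unfolding tau'_Some_eq_Inf[OF dag \<open>2 \<le> i\<close>] by (blast intro: Inf_lower2[OF _ SUP_least])
qed

lemma tau'_less_ereal_obtains_weights:
  assumes dag: "dag n E" and "2 \<le> i" and "tau' E l q i (Some j) < ereal L"
  obtains \<alpha> where "\<forall>p\<in>preds E i. 0 \<le> \<alpha> p" and "(\<Sum>p\<in>preds E i. \<alpha> p) = 1"
    and "\<And>p. p \<in> preds E i \<Longrightarrow> 0 < \<alpha> p \<Longrightarrow>
      tau' E l q p (Some \<lfloor>real_of_int j + log q (\<alpha> p)\<rfloor>) \<le> ereal (L - l p i)"
proof -
  obtain \<alpha> where \<alpha>: "\<forall>p\<in>preds E i. 0 \<le> \<alpha> p" "(\<Sum>p\<in>preds E i. \<alpha> p) = 1"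
    and sup_less: "(SUP p\<in>preds E i. tau' E l q p (tau'_arg q j (\<alpha> p)) + ereal (l p i)) < ereal L"
    using assms(3) unfolding tau'_Some_eq_Inf[OF dag \<open>2 \<le> i\<close>] Inf_less_iff by blast
  have "tau' E l q p (Some \<lfloor>real_of_int j + log q (\<alpha> p)\<rfloor>) \<le> ereal (L - l p i)"
    if p: "p \<in> preds E i" and "0 < \<alpha> p" for p
  proof -
    have "tau' E l q p (Some \<lfloor>real_of_int j + log q (\<alpha> p)\<rfloor>) + ereal (l p i) < ereal L"
      using le_less_trans[OF SUP_upper[OF p] sup_less] \<open>0 < \<alpha> p\<close> by (simp add: tau'_arg_pos)
    then show ?thesis by (cases "tau' E l q p (Some \<lfloor>real_of_int j + log q (\<alpha> p)\<rfloor>)") auto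
  qed
  with \<alpha> show ?thesis by (rule that)
qed

lemma tau'_le_if_powi_le_path_count:
  assumes dag: "dag n E" and q: "1 < q"
  shows "1 \<le> i \<Longrightarrow> q powi j \<le> real (path_count E l i L) \<Longrightarrow> tau' E l q i (Some j) \<le> ereal L"
proof (induction i arbitrary: j L rule: less_induct)
  case (less i)
  have "0 < q powi j" using q by simp
  show ?case
  proof (cases "i = 1")
    case True
    show ?thesis
      using less.prems(2) \<open>0 < q powi j\<close> unfolding True path_count_start[OF dag] tau'_start
      by (auto split: if_splits)
  next
    case False
    then have "2 \<le> i" using less.prems(1) by simp
    define c where "c p = real (path_count E l p (L - l p i))" for p
    define C where "C = real (path_count E l i L)"
    define \<alpha> where "\<alpha> p = c p / C" for p
    have "0 < C" using less.prems \<open>0 < q powi j\<close> by (simp add: C_def)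
    have "\<forall>p\<in>preds E i. 0 \<le> \<alpha> p" using \<open>0 < C\<close> by (simp add: \<alpha>_def c_def)
    moreover have "(\<Sum>p\<in>preds E i. \<alpha> p) = 1"
      using path_count_eq_sum_preds[OF dag False, of l L] \<open>0 < C\<close>
      by (simp add: \<alpha>_def c_def C_def flip: sum_divide_distrib)
    moreover have "tau' E l q p (Some \<lfloor>real_of_int j + log q (\<alpha> p)\<rfloor>) \<le> ereal (L - l p i)"
      if p: "p \<in> preds E i" and "0 < \<alpha> p" for p
    proof -
      have "q powi \<lfloor>real_of_int j + log q (\<alpha> p)\<rfloor> \<le> q powi j * \<alpha> p"
        by (rule powi_floor_log_bounds(1)[OF q \<open>0 < \<alpha> p\<close>])
      also have "\<dots> \<le> C * \<alpha> p"
        using less.prems \<open>0 < \<alpha> p\<close> by (simp add: C_def)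
      also have "\<dots> = c p" using \<open>0 < C\<close> by (simp add: \<alpha>_def)
      finally show ?thesis
        using less.IH dag_predsD[OF dag p] by (simp add: c_def)
    qed
    ultimately show ?thesis by (rule tau'_le_ereal_of_weights[OF dag \<open>2 \<le> i\<close>])
  qed
qed

lemma powi_le_path_count_if_tau'_le:
  assumes dag: "dag n E" and q: "1 < q"
  shows "1 \<le> i \<Longrightarrow> tau' E l q i (Some j) \<le> ereal L
    \<Longrightarrow> q powi (j - int i + 1) \<le> real (path_count E l i L)"
proof (induction i arbitrary: j L rule: less_induct)
  case (less i)
  show ?case
  proof (cases "i = 1")
    case True
    show ?thesis
      using less.prems(2) unfolding True path_count_start[OF dag] tau'_start
      by (auto split: if_splits)
  next
    case False
    then have "2 \<le> i" using less.prems(1) by simp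
    define X where "X = q powi (j - int i + 1)"
    show ?thesis unfolding X_def[symmetric]
    proof (rule le_path_count_of_right[OF dag])
      fix L' assume "L < L'"
      then have "tau' E l q i (Some j) < ereal L'"
        using less.prems(2) le_less_trans by fastforce
      then obtain \<alpha> where \<alpha>: "\<forall>p\<in>preds E i. 0 \<le> \<alpha> p" "(\<Sum>p\<in>preds E i. \<alpha> p) = 1"
        and \<tau>': "\<And>p. p \<in> preds E i \<Longrightarrow> 0 < \<alpha> p \<Longrightarrow>
          tau' E l q p (Some \<lfloor>real_of_int j + log q (\<alpha> p)\<rfloor>) \<le> ereal (L' - l p i)"
        by (elim tau'_less_ereal_obtains_weights[OF dag \<open>2 \<le> i\<close>]) blast
      have "\<alpha> p * X \<le> real (path_count E l p (L' - l p i))" if p: "p \<in> preds E i" for p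
      proof (cases "\<alpha> p = 0")
        case True
        then show ?thesis by simp
      next
        case False
        then have "0 < \<alpha> p" using \<alpha>(1) p by force
        let ?m = "\<lfloor>real_of_int j + log q (\<alpha> p)\<rfloor>"
        have "tau' E l q p (Some ?m) \<le> ereal (L' - l p i)" using \<tau>' p \<open>0 < \<alpha> p\<close> .
        then have IH: "q powi (?m - int p + 1) \<le> real (path_count E l p (L' - l p i))"
          using less.IH dag_predsD[OF dag p] by simp
        have "\<alpha> p * X \<le> q powi (?m - int p + 1)"
          unfolding X_def using dag_predsD[OF dag p] by (intro mult_powi_le_powi_floor_log q \<open>0 < \<alpha> p\<close>) simp
        with IH show ?thesis by linarith
      qed
      then have "(\<Sum>p\<in>preds E i. \<alpha> p * X) \<le> (\<Sum>p\<in>preds E i. real (path_count E l p (L' - l p i)))"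
        by (rule sum_mono)
      then show "X \<le> real (path_count E l i L')"
        using \<alpha>(2) path_count_eq_sum_preds[OF dag False, of l L']
        by (simp flip: sum_distrib_right)
    qed
  qed
qed

lemma path_count_eq_if_tau_bracket:
  assumes "dag n E" and "tau E l i (real a) \<le> ereal L" and "ereal L < tau E l i (real a + 1)"
  shows "path_count E l i L = a"
proof -
  have "real a \<le> real (path_count E l i L)"
    using assms(2) tau_le_iff[OF assms(1)] by blast
  moreover have "real (path_count E l i L) < real (Suc a)"
    using assms(3) tau_le_iff[OF assms(1), of l i "real a + 1" L] by auto
  ultimately show ?thesis by (simp only: of_nat_le_iff of_nat_less_iff)
qed

lemma root_powr_Suc_power:
  fixes x :: real
  assumes "0 < x"
  shows "(x powr (1 / (real n + 1))) ^ Suc n = x"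
proof -
  have "(x powr (1 / (real n + 1))) ^ Suc n = (x powr (1 / (real n + 1))) powr real (Suc n)"
    using assms by (simp only: powr_realpow powr_gt_zero)
  also have "\<dots> = x" using assms by (simp add: powr_powr add.commute)
  finally show ?thesis .
qed

theorem lemma2:
  fixes n :: nat and E :: "(nat \<times> nat) set" and l :: "nat \<Rightarrow> nat \<Rightarrow> real"
    and \<epsilon> q L :: real and k :: int and a :: nat
  assumes "1 \<le> n" and "dag n E" and "0 < \<epsilon>"
    and "q = (1 + \<epsilon>) powr (1 / (real n + 1))"
    and "tau' E l q n (Some k) \<le> ereal L" and "ereal L < tau' E l q n (Some (k + 1))"
    and "tau E l n (real a) \<le> ereal L" and "ereal L < tau E l n (real a + 1)"
  shows "inverse (1 + \<epsilon>) \<le> real a / q powi k \<and> real a / q powi k \<le> 1 + \<epsilon>"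
proof -
  have q: "1 < q" using assms(3,4) by simp
  have q_Suc_n: "q ^ Suc n = 1 + \<epsilon>"
    using assms(3,4) root_powr_Suc_power[of "1 + \<epsilon>" n] by simp
  have a: "path_count E l n L = a" using path_count_eq_if_tau_bracket assms(2,7,8) .
  have lower: "q powi (k - int n + 1) \<le> real a"
    using powi_le_path_count_if_tau'_le[OF assms(2) q assms(1,5)] a by simp
  have upper: "real a < q powi (k + 1)"
    using tau'_le_if_powi_le_path_count[OF assms(2) q assms(1), of "k + 1" l L] assms(6) a by force
  have "inverse (1 + \<epsilon>) = q powi (- int (Suc n))"
    by (simp only: power_int_minus power_int_of_nat q_Suc_n)
  also have "\<dots> \<le> q powi (k - int n + 1) / q powi k"
    using q by (simp add: power_int_diff[symmetric] power_int_increasing)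
  also have "\<dots> \<le> real a / q powi k"
    using lower q by (simp add: divide_right_mono)
  finally have "inverse (1 + \<epsilon>) \<le> real a / q powi k" .
  moreover have "real a / q powi k \<le> q powi (k + 1) / q powi k"
    using upper q by (simp add: divide_right_mono)
  moreover have "q powi (k + 1) / q powi k \<le> 1 + \<epsilon>"
    using q q_Suc_n power_increasing[of 1 "Suc n" q] by (simp add: power_int_add)
  ultimately show ?thesis by linarith
qed

end
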